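(* Consider an instance of the multi-vehicle dial-a-ride problem with vehicle locations $o_1,\dots,o_h$, capacity $\lambda$, and requests $(s_1,t_1),\dots,(s_m,t_m)$ in a metric $w$. Let $\mathcal{T}_s$ and $\mathcal{T}_t$ be sets of tours such that for each vehicle $o_{i'}$ there is exactly one tour $T_s=o_{i'}s_{j_1}s_{j_2}\dots s_{j_q}\in\mathcal{T}_s$ and exactly one tour $T_t=o_{i'}t_{j_1}t_{j_2}\dots t_{j_q}\in\mathcal{T}_t$ (same index sequence), and every request index appears in exactly one of these index sequences. For each such pair (writing $a_k=s_{j_k}$, $b_k=t_{j_k}$), build a route $W_{o_{i'}}$ as follows. If $q\le\lambda$, let $W_{o_{i'}}=o_{i'}a_1\dots a_q b_1\dots b_q$. If $q>\lambda$, choose $\theta$ uniformly at random from $\{1,\dots,\lambda\}$, let $N_\theta=\lceil (q-\theta)/\lambda\rceil+1$, split the index range $1,\dots,q$ into consecutive blocks $I_1=\{1,\dots,\theta\}$, $I_2=\{\theta+1,\dots,\theta+\lambda\}$, $\dots$, $I_{N_\theta}=\{\theta+\lambda(N_\theta-2)+1,\dots,q\}$, and let $W_{o_{i'}}$ be the walk starting at $o_{i'}$ that, for $j=1,\dots,N_\theta$ in order, visits $a_k$ for $k\in I_j$ in increasing order of $k$ and then $b_k$ for $k\in I_j$ in increasing order of $k$. Let $\mathcal{W}$ be the set of all routes built. Then $$\mathbb{E}[w(\mathcal{W})]\le \frac{2}{\lambda}\sum_{j=1}^m w(s_j,t_j)+3\big(w(\mathcal{T}_s)+w(\mathcal{T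}_t)\big).$$
   Context: The metric $w$ satisfies $w(a,a)=0$, symmetry and the triangle inequality. The weight of a walk $v_1v_2\dots v_q$ is $\sum_{j=1}^{q-1}w(v_j,v_{j+1})$; the weight of a tour $v_1v_2\dots v_q$ is $\sum_{j=1}^{q-1}w(v_j,v_{j+1})+w(v_q,v_1)$; the weight of a set of walks or tours is the sum of their weights. Sources, destinations and vehicle locations are treated as pairwise distinct points (possibly at distance $0$). *)

theory Defs
  imports "HOL-Probability.Probability"
begin

definition walk_weight :: "('a \<Rightarrow> 'a \<Rightarrow> real) \<Rightarrow> 'a list \<Rightarrow> real" where
  "walk_weight w xs = sum_list (map (\<lambda>(x, y). w x y) (zip xs (tl xs)))"

definition tour_weight :: "('a \<Rightarrow> 'a \<Rightarrow> real) \<Rightarrow> 'a list \<Rightarrow> real" where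
  "tour_weight w xs = walk_weight w xs + (if xs = [] then 0 else w (last xs) (hd xs))"

definition num_blocks :: "nat \<Rightarrow> nat \<Rightarrow> nat \<Rightarrow> nat" where
  "num_blocks lam theta q = nat \<lceil>(real q - real theta) / real lam\<rceil> + 1"

definition blocks :: "nat \<Rightarrow> nat \<Rightarrow> nat \<Rightarrow> nat list list" where
  "blocks lam theta q =
     [1..<theta + 1] #
     map (\<lambda>j. [theta + lam * (j - 2) + 1 ..< min q (theta + lam * (j - 1)) + 1])
         [2..<num_blocks lam theta q + 1]"

definition block_walk :: "'a \<Rightarrow> 'a list \<Rightarrow> 'a list \<Rightarrow> nat list list \<Rightarrow> 'a list" where
  "block_walk o' a b Is =
     o' # concat (map (\<lambda>I. map (\<lambda>k. a ! (k - 1)) I @ map (\<lambda>k. b ! (k - 1)) I) Is)"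

definition route :: "nat \<Rightarrow> nat \<Rightarrow> 'a \<Rightarrow> 'a list \<Rightarrow> 'a list \<Rightarrow> 'a list" where
  "route lam theta o' a b =
     (if length a \<le> lam then o' # a @ b
      else block_walk o' a b (blocks lam theta (length a)))"

end

theory Submission
  imports Defs
begin

(* Each block is served by walking its
   pickups, returning along that walk to the block's first pickup, crossing to that request's
   delivery and walking the deliveries; the move from the last delivery of a block to the first
   pickup of the next one costs at most the next delivery edge plus that request's crossing.
   Hence a route costs at most 2 w(T_s) + w(T_t) plus twice the crossings w(a_k, b_k) of the
   requests heading the blocks after the first (the crossing of the first request is absorbed
   by the first edges of the two tours). Each position heads such a block for at most one value
   of theta, so averaging over theta leaves (2/lambda) sum_j w(s_j, t_j). For q <= lambda the
   route is bounded by w(T_s) + w(T_t) directly. *)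

lemma Suc_less_num_blocks_iff:
  assumes "0 < lam"
  shows "Suc i < num_blocks lam \<theta> q \<longleftrightarrow> \<theta> + lam * i < q"
proof -
  have "Suc i < num_blocks lam \<theta> q \<longleftrightarrow> real i < (real q - real \<theta>) / real lam"
    by (simp add: num_blocks_def zless_nat_eq_int_zless less_ceiling_iff)
  also have "\<dots> \<longleftrightarrow> real (\<theta> + lam * i) < real q"
    using assms by (simp add: less_divide_eq algebra_simps)
  finally show ?thesis by (simp only: of_nat_less_iff)
qed

lemma num_blocks_pos: "0 < num_blocks lam \<theta> q"
  by (simp add: num_blocks_def)

definition block_boundary :: "nat \<Rightarrow> nat \<Rightarrow> nat \<Rightarrow> nat \<Rightarrow> nat" where
  "block_boundary lam \<theta> q i = (if i = 0 then 1 else min q (\<theta> + lam * (i - 1)) + 1)"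

lemma blocks_eq_map_block_boundary:
  assumes "0 < lam" "\<theta> \<le> q"
  shows "blocks lam \<theta> q
    = map (\<lambda>i. [block_boundary lam \<theta> q i..<block_boundary lam \<theta> q (Suc i)]) [0..<num_blocks lam \<theta> q]"
proof -
  have len: "length (blocks lam \<theta> q) = num_blocks lam \<theta> q"
    using num_blocks_pos[of lam \<theta> q] by (simp add: blocks_def) linarith
  show ?thesis
  proof (rule nth_equalityI)
    fix i assume i: "i < length (blocks lam \<theta> q)"
    show "blocks lam \<theta> q ! i = map (\<lambda>i. [block_boundary lam \<theta> q i..<block_boundary lam \<theta> q (Suc i)]) [0..<num_blocks lam \<theta> q] ! i"
    proof (cases i)
      case 0
      then show ?thesis using assms i len by (simp add: blocks_def block_boundary_def)
    next
      case (Suc j)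
      then have "Suc j < num_blocks lam \<theta> q" using i len by simp
      then have "[2..<num_blocks lam \<theta> q + 1] ! j = j + 2" by (simp del: upt_Suc)
      then have "blocks lam \<theta> q ! Suc j = [\<theta> + lam * j + 1..<min q (\<theta> + lam * (j + 1)) + 1]"
        using \<open>Suc j < num_blocks lam \<theta> q\<close> by (simp add: blocks_def del: upt_Suc)
      moreover have "\<theta> + lam * j < q"
        using \<open>Suc j < num_blocks lam \<theta> q\<close> Suc_less_num_blocks_iff[OF assms(1)] by simp
      ultimately show ?thesis
        using \<open>Suc j < num_blocks lam \<theta> q\<close> Suc by (simp add: block_boundary_def del: upt_Suc)
    qed
  qed (simp add: len)
qed

lemma strict_mono_on_block_boundary:
  assumes "0 < lam" "0 < \<theta>" "\<theta> < q"
  shows "strict_mono_on {..num_blocks lam \<theta> q} (block_boundary lam \<theta> q)"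
proof (rule strict_mono_onI)
  fix i j assume ij: "i \<in> {..num_blocks lam \<theta> q}" "j \<in> {..num_blocks lam \<theta> q}" "i < j"
  have "\<theta> + lam * (i - 1) < q" if "0 < i"
    using that ij Suc_less_num_blocks_iff[OF assms(1), of "i - 1" \<theta> q] by simp
  then show "block_boundary lam \<theta> q i < block_boundary lam \<theta> q j"
    using assms ij by (auto simp: block_boundary_def)
qed

lemma block_boundary_num_blocks:
  assumes "0 < lam"
  shows "block_boundary lam \<theta> q (num_blocks lam \<theta> q) = q + 1"
proof -
  obtain c where c: "num_blocks lam \<theta> q = Suc c"
    using num_blocks_pos gr0_conv_Suc by blast
  then have "\<not> \<theta> + lam * c < q"
    using Suc_less_num_blocks_iff[OF assms, of c \<theta> q] by simp
  then show ?thesis by (simp add: c block_boundary_def)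
qed

lemma map_nth_pred_upt: "map (\<lambda>k. xs ! (k - 1)) [1..<length xs + 1] = xs"
  by (rule nth_equalityI) (auto simp del: upt_Suc)

lemma sum_later_block_heads:
  assumes "0 < lam"
  shows "(\<Sum>i = 1..<num_blocks lam \<theta> q. h (block_boundary lam \<theta> q i))
    = (\<Sum>i | \<theta> + lam * i < q. h (\<theta> + lam * i + 1))"
proof -
  obtain c where c: "num_blocks lam \<theta> q = Suc c"
    using num_blocks_pos gr0_conv_Suc by blast
  have "(\<Sum>i = 1..<num_blocks lam \<theta> q. h (block_boundary lam \<theta> q i))
      = (\<Sum>i<c. h (block_boundary lam \<theta> q (Suc i)))"
    by (simp only: c One_nat_def sum.shift_bounds_Suc_ivl atLeast0LessThan)
  also have "{..<c} = {i. \<theta> + lam * i < q}"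
    using Suc_less_num_blocks_iff[OF assms, of _ \<theta> q] by (auto simp: c)
  finally show ?thesis
    by (simp add: block_boundary_def)
qed

lemma sum_strided_le_sum:
  fixes d :: "nat \<Rightarrow> real"
  assumes lam: "0 < lam" and d: "\<And>k. 0 \<le> d k"
  shows "(\<Sum>\<theta> = 1..lam. \<Sum>i | \<theta> + lam * i < q. d (\<theta> + lam * i)) \<le> (\<Sum>k<q. d k)"
proof -
  define S where "S = (SIGMA \<theta>:{1..lam}. {i. \<theta> + lam * i < q})"
  define pos where "pos = (\<lambda>(\<theta>, i). \<theta> + lam * i)"
  have "i < q" if "\<theta> + lam * i < q" for \<theta> i
    using lam that gr0_conv_Suc by force
  then have finite: "finite {i. \<theta> + lam * i < q}" for \<theta>
    by (intro bounded_nat_set_is_finite) auto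
  have "inj_on pos S"
  proof (rule inj_onI, clarify)
    fix \<theta> i \<theta>' i' assume "(\<theta>, i) \<in> S" "(\<theta>', i') \<in> S" "pos (\<theta>, i) = pos (\<theta>', i')"
    then have lt: "\<theta> - 1 < lam" "\<theta>' - 1 < lam" and 1: "1 \<le> \<theta>" "1 \<le> \<theta>'"
      and eq: "(\<theta> - 1) + lam * i = (\<theta>' - 1) + lam * i'"
      by (auto simp: S_def pos_def)
    have "i = ((\<theta> - 1) + lam * i) div lam" "i' = ((\<theta>' - 1) + lam * i') div lam"
      using lt by simp_all
    then have "i = i'" using eq by simp
    then show "\<theta> = \<theta>' \<and> i = i'" using eq 1 by simp
  qed
  have "(\<Sum>\<theta> = 1..lam. \<Sum>i | \<theta> + lam * i < q. d (\<theta> + lam * i)) = (\<Sum>p\<in>S. d (pos p))"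
    unfolding S_def pos_def using finite by (subst sum.Sigma) (auto simp: case_prod_beta)
  also have "\<dots> = sum d (pos ` S)"
    using \<open>inj_on pos S\<close> by (simp add: sum.reindex)
  also have "\<dots> \<le> sum d {..<q}"
    by (rule sum_mono2) (auto simp: S_def pos_def d)
  finally show ?thesis .
qed

lemma expectation_Pi_pmf_sum:
  fixes f :: "'i \<Rightarrow> 'a \<Rightarrow> real"
  assumes "finite I" and integrable: "\<And>i. i \<in> I \<Longrightarrow> integrable (measure_pmf (p i)) (f i)"
  shows "measure_pmf.expectation (Pi_pmf I dflt p) (\<lambda>\<theta>. \<Sum>i\<in>I. f i (\<theta> i))
    = (\<Sum>i\<in>I. measure_pmf.expectation (p i) (f i))"
proof -
  have marginal: "map_pmf (\<lambda>\<theta>. \<theta> i) (Pi_pmf I dflt p) = p i" if "i \<in> I" for i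
    using \<open>finite I\<close> that by (simp add: Pi_pmf_component)
  have "measure_pmf.expectation (Pi_pmf I dflt p) (\<lambda>\<theta>. \<Sum>i\<in>I. f i (\<theta> i))
      = (\<Sum>i\<in>I. measure_pmf.expectation (Pi_pmf I dflt p) (\<lambda>\<theta>. f i (\<theta> i)))"
    using integrable marginal by (intro Bochner_Integration.integral_sum) (metis integrable_map_pmf_eq)
  also have "\<dots> = (\<Sum>i\<in>I. measure_pmf.expectation (p i) (f i))"
    using marginal by (intro sum.cong refl) (metis integral_map_pmf)
  finally show ?thesis .
qed

lemma sum_list_map_eq_sum_count_list:
  fixes f :: "'b \<Rightarrow> 'c::comm_semiring_1"
  assumes "finite J" "set xs \<subseteq> J"
  shows "sum_list (map f xs) = (\<Sum>j\<in>J. of_nat (count_list xs j) * f j)"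
  using assms(2)
proof (induction xs)
  case (Cons x xs)
  have "(\<Sum>j\<in>J. of_nat (count_list (x # xs) j) * f j)
      = (\<Sum>j\<in>J. (if x = j then f j else 0) + of_nat (count_list xs j) * f j)"
    by (intro sum.cong refl) (simp add: algebra_simps)
  also have "\<dots> = f x + (\<Sum>j\<in>J. of_nat (count_list xs j) * f j)"
    using Cons.prems assms(1) by (simp add: sum.distrib)
  finally show ?case using Cons by simp
qed simp

lemma sum_sum_list_map_partition:
  fixes f :: "'b \<Rightarrow> 'c::comm_semiring_1"
  assumes "finite J" "\<And>i. i \<in> I \<Longrightarrow> set (xs i) \<subseteq> J"
    and once: "\<And>j. j \<in> J \<Longrightarrow> (\<Sum>i\<in>I. count_list (xs i) j) = 1"
  shows "(\<Sum>i\<in>I. sum_list (map f (xs i))) = (\<Sum>j\<in>J. f j)"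
proof -
  have "(\<Sum>i\<in>I. sum_list (map f (xs i))) = (\<Sum>i\<in>I. \<Sum>j\<in>J. of_nat (count_list (xs i) j) * f j)"
    using assms(1,2) by (intro sum.cong refl) (simp add: sum_list_map_eq_sum_count_list)
  also have "\<dots> = (\<Sum>j\<in>J. of_nat (\<Sum>i\<in>I. count_list (xs i) j) * f j)"
    by (subst sum.swap) (simp add: sum_distrib_right)
  also have "\<dots> = (\<Sum>j\<in>J. f j)"
    using once by simp
  finally show ?thesis .
qed

locale pseudometric =
  fixes w :: "'a \<Rightarrow> 'a \<Rightarrow> real"
  assumes refl: "w x x = 0"
    and sym: "w x y = w y x"
    and triangle: "w x z \<le> w x y + w y z"
begin

lemma nonneg: "0 \<le> w x y"
  using triangle[of x x y] refl[of x] sym[of x y] by linarith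

lemma walk_weight_Nil [simp]: "walk_weight w [] = 0"
  and walk_weight_singleton [simp]: "walk_weight w [x] = 0"
  and walk_weight_Cons_Cons [simp]: "walk_weight w (x # y # xs) = w x y + walk_weight w (y # xs)"
  by (simp_all add: walk_weight_def)

lemma walk_weight_Cons: "xs \<noteq> [] \<Longrightarrow> walk_weight w (x # xs) = w x (hd xs) + walk_weight w xs"
  by (cases xs) auto

lemma walk_weight_nonneg: "0 \<le> walk_weight w xs"
  by (induction xs rule: induct_list012) (auto intro: add_nonneg_nonneg nonneg)

lemma walk_weight_append:
  "xs \<noteq> [] \<Longrightarrow> ys \<noteq> [] \<Longrightarrow>
   walk_weight w (xs @ ys) = walk_weight w xs + w (last xs) (hd ys) + walk_weight w ys"
  by (induction xs rule: induct_list012) (auto simp: walk_weight_Cons)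

lemma dist_hd_last_le_walk_weight: "xs \<noteq> [] \<Longrightarrow> w (hd xs) (last xs) \<le> walk_weight w xs"
proof (induction xs rule: induct_list012)
  case (3 x y zs)
  then show ?case using triangle[of x "last (y # zs)" y] by simp
qed (auto simp: refl)

lemma walk_weight_append_le:
  assumes "xs \<noteq> []" "ys \<noteq> []"
  shows "walk_weight w (xs @ ys) \<le> 2 * walk_weight w xs + w (hd xs) (hd ys) + walk_weight w ys"
proof -
  have "w (last xs) (hd ys) \<le> w (hd xs) (last xs) + w (hd xs) (hd ys)"
    using triangle[of "last xs" "hd ys" "hd xs"] sym[of "last xs" "hd xs"] by simp
  then show ?thesis
    using walk_weight_append[OF assms] dist_hd_last_le_walk_weight[OF assms(1)] by simp
qed

lemma walk_weight_map_upt_split: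
  assumes "l < u" "u < v"
  shows "walk_weight w (map f [l..<v])
    = walk_weight w (map f [l..<u]) + w (f (u - 1)) (f u) + walk_weight w (map f [u..<v])"
proof -
  have "map f [l..<v] = map f [l..<u] @ map f [u..<v]"
    using assms upt_add_eq_append[of l u "v - u"] by simp
  then show ?thesis
    using assms walk_weight_append[of "map f [l..<u]" "map f [u..<v]"] by (simp add: last_map hd_map)
qed

lemma tour_weight_nonneg: "0 \<le> tour_weight w xs"
  by (simp add: tour_weight_def nonneg walk_weight_nonneg)

lemma tour_weight_Cons_ge:
  "xs \<noteq> [] \<Longrightarrow> w x (hd xs) + walk_weight w xs \<le> tour_weight w (x # xs)"
  by (simp add: tour_weight_def walk_weight_Cons nonneg)

lemma walk_weight_serve_blocks:
  assumes "0 < n" and mono: "strict_mono_on {..n} \<beta>"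
  shows "walk_weight w (concat (map (\<lambda>i. map f [\<beta> i..<\<beta> (Suc i)] @ map g [\<beta> i..<\<beta> (Suc i)]) [0..<n]))
    \<le> 2 * walk_weight w (map f [\<beta> 0..<\<beta> n]) + walk_weight w (map g [\<beta> 0..<\<beta> n])
      + w (f (\<beta> 0)) (g (\<beta> 0)) + 2 * (\<Sum>i = 1..<n. w (f (\<beta> i)) (g (\<beta> i)))"
  using assms
proof (induction n rule: nat_induct_non_zero)
  case 1
  then have "\<beta> 0 < \<beta> 1" by (simp add: strict_mono_onD)
  then show ?case
    using walk_weight_append_le[of "map f [\<beta> 0..<\<beta> 1]" "map g [\<beta> 0..<\<beta> 1]"] by (simp add: hd_map)
next
  case (Suc n)
  define serve where "serve i = map f [\<beta> i..<\<beta> (Suc i)] @ map g [\<beta> i..<\<beta> (Suc i)]" for i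
  let ?P = "concat (map serve [0..<n])"
  have mono_n: "strict_mono_on {..n} \<beta>"
    using Suc.prems by (rule monotone_on_subset) auto
  have lt: "\<beta> 0 < \<beta> n" "\<beta> n < \<beta> (Suc n)"
    using Suc.prems \<open>0 < n\<close> by (auto intro: strict_mono_onD)
  have P: "?P \<noteq> []" "last ?P = g (\<beta> n - 1)"
  proof -
    obtain m where n: "n = Suc m" using \<open>0 < n\<close> gr0_conv_Suc by blast
    have "\<beta> m < \<beta> n" using mono_n n by (auto intro: strict_mono_onD)
    then show "?P \<noteq> []" "last ?P = g (\<beta> n - 1)"
      by (auto simp: n serve_def last_map)
  qed
  have serve_n: "serve n \<noteq> []" "hd (serve n) = f (\<beta> n)"
    using lt by (auto simp: serve_def hd_map)
  have transition: "w (g (\<beta> n - 1)) (f (\<beta> n)) \<le> w (g (\<beta> n - 1)) (g (\<beta> n)) + w (f (\<beta> n)) (g (\<beta> n))"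
    using triangle[of "g (\<beta> n - 1)" "f (\<beta> n)" "g (\<beta> n)"] sym[of "g (\<beta> n)"] by simp
  have "walk_weight w (serve n) \<le> 2 * walk_weight w (map f [\<beta> n..<\<beta> (Suc n)])
      + w (f (\<beta> n)) (g (\<beta> n)) + walk_weight w (map g [\<beta> n..<\<beta> (Suc n)])"
    using walk_weight_append_le[of "map f [\<beta> n..<\<beta> (Suc n)]" "map g [\<beta> n..<\<beta> (Suc n)]"] lt
    by (simp add: serve_def hd_map)
  moreover have "walk_weight w (concat (map serve [0..<Suc n]))
      = walk_weight w ?P + w (g (\<beta> n - 1)) (f (\<beta> n)) + walk_weight w (serve n)"
    using walk_weight_append[of ?P "serve n"] P serve_n by simp
  moreover have "walk_weight w (map f [\<beta> 0..<\<beta> n]) + walk_weight w (map f [\<beta> n..<\<beta> (Suc n)])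
      \<le> walk_weight w (map f [\<beta> 0..<\<beta> (Suc n)])"
    using walk_weight_map_upt_split[OF lt, of f] nonneg[of "f (\<beta> n - 1)" "f (\<beta> n)"] by simp
  moreover have "(\<Sum>i = 1..<Suc n. w (f (\<beta> i)) (g (\<beta> i)))
      = (\<Sum>i = 1..<n. w (f (\<beta> i)) (g (\<beta> i))) + w (f (\<beta> n)) (g (\<beta> n))"
    using \<open>0 < n\<close> by simp
  moreover note walk_weight_map_upt_split[OF lt, of g] transition Suc.IH[OF mono_n]
  ultimately show ?case
    unfolding serve_def by linarith
qed

lemma walk_weight_route_short:
  assumes "length b = length a" "length a \<le> lam"
  shows "walk_weight w (route lam \<theta> o' a b) \<le> tour_weight w (o' # a) + tour_weight w (o' # b)"
proof (cases "b = []")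
  case True
  then show ?thesis using assms by (simp add: route_def tour_weight_nonneg)
next
  case False
  have "walk_weight w (route lam \<theta> o' a b)
      = walk_weight w (o' # a) + w (last (o' # a)) (hd b) + walk_weight w b"
    using assms False walk_weight_append[of "o' # a" b] by (simp add: route_def)
  moreover have "w (last (o' # a)) (hd b) \<le> w (last (o' # a)) o' + w o' (hd b)"
    by (rule triangle)
  moreover have "walk_weight w (o' # a) + w (last (o' # a)) o' = tour_weight w (o' # a)"
    by (simp add: tour_weight_def)
  moreover note tour_weight_Cons_ge[OF False, of o']
  ultimately show ?thesis by linarith
qed

lemma walk_weight_block_walk_le:
  assumes n: "0 < n" and mono: "strict_mono_on {..n} \<beta>"
    and \<beta>: "\<beta> 0 = 1" "\<beta> n = length a + 1" and len: "length b = length a"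
  shows "walk_weight w (block_walk o' a b (map (\<lambda>i. [\<beta> i..<\<beta> (Suc i)]) [0..<n]))
    \<le> w o' (a ! 0) + 2 * walk_weight w a + walk_weight w b + w (a ! 0) (b ! 0)
      + 2 * (\<Sum>i = 1..<n. w (a ! (\<beta> i - 1)) (b ! (\<beta> i - 1)))"
proof -
  define f where "f = (\<lambda>k. a ! (k - 1))"
  define g where "g = (\<lambda>k. b ! (k - 1))"
  define X where "X = concat (map (\<lambda>i. map f [\<beta> i..<\<beta> (Suc i)] @ map g [\<beta> i..<\<beta> (Suc i)]) [0..<n])"
  have "block_walk o' a b (map (\<lambda>i. [\<beta> i..<\<beta> (Suc i)]) [0..<n]) = o' # X"
    by (simp add: block_walk_def X_def f_def g_def o_def)
  moreover have "X \<noteq> []" "hd X = a ! 0"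
    using n strict_mono_onD[OF mono, of 0 1] \<beta>(1) by (auto simp: X_def f_def upt_conv_Cons)
  moreover have "map f [\<beta> 0..<\<beta> n] = a" "map g [\<beta> 0..<\<beta> n] = b"
    using map_nth_pred_upt[of a] map_nth_pred_upt[of b] by (simp_all add: \<beta> f_def g_def len)
  moreover have "w (f (\<beta> 0)) (g (\<beta> 0)) = w (a ! 0) (b ! 0)"
    "(\<Sum>i = 1..<n. w (f (\<beta> i)) (g (\<beta> i))) = (\<Sum>i = 1..<n. w (a ! (\<beta> i - 1)) (b ! (\<beta> i - 1)))"
    by (simp_all add: \<beta>(1) f_def g_def)
  ultimately show ?thesis
    using walk_weight_serve_blocks[OF n mono, of f g] by (simp add: walk_weight_Cons X_def)
qed

lemma walk_weight_route_long:
  assumes len: "length b = length a" and long: "lam < length a" and \<theta>: "\<theta> \<in> {1..lam}"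
  shows "walk_weight w (route lam \<theta> o' a b) \<le> 2 * tour_weight w (o' # a) + tour_weight w (o' # b)
    + 2 * (\<Sum>i | \<theta> + lam * i < length a. w (a ! (\<theta> + lam * i)) (b ! (\<theta> + lam * i)))"
proof -
  define q where "q = length a"
  define \<beta> where "\<beta> = block_boundary lam \<theta> q"
  have lam: "0 < lam" and \<theta>q: "0 < \<theta>" "\<theta> < q"
    using \<theta> long by (auto simp: q_def)
  have "walk_weight w (route lam \<theta> o' a b)
      \<le> w o' (a ! 0) + 2 * walk_weight w a + walk_weight w b + w (a ! 0) (b ! 0)
        + 2 * (\<Sum>i = 1..<num_blocks lam \<theta> q. w (a ! (\<beta> i - 1)) (b ! (\<beta> i - 1)))"
    using long blocks_eq_map_block_boundary[OF lam less_imp_le[OF \<theta>q(2)]]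
      walk_weight_block_walk_le[OF num_blocks_pos strict_mono_on_block_boundary[OF lam \<theta>q] _ _ len]
      block_boundary_num_blocks[OF lam]
    by (simp add: route_def q_def \<beta>_def block_boundary_def)
  also have "(\<Sum>i = 1..<num_blocks lam \<theta> q. w (a ! (\<beta> i - 1)) (b ! (\<beta> i - 1)))
      = (\<Sum>i | \<theta> + lam * i < q. w (a ! (\<theta> + lam * i)) (b ! (\<theta> + lam * i)))"
    using sum_later_block_heads[OF lam, where h = "\<lambda>k. w (a ! (k - 1)) (b ! (k - 1))"]
    by (simp add: \<beta>_def)
  moreover have "w (a ! 0) (b ! 0) \<le> w o' (a ! 0) + w o' (b ! 0)"
    using triangle[of "a ! 0" "b ! 0" o'] sym[of "a ! 0" o'] by simp
  moreover have "a \<noteq> []" "b \<noteq> []"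
    using long len by auto
  ultimately show ?thesis
    using tour_weight_Cons_ge[of a o'] tour_weight_Cons_ge[of b o'] by (simp add: hd_conv_nth q_def)
qed

lemma sum_walk_weight_route_le:
  assumes len: "length b = length a" and lam: "0 < lam"
  shows "(\<Sum>\<theta> = 1..lam. walk_weight w (route lam \<theta> o' a b))
    \<le> 2 * (\<Sum>k<length a. w (a ! k) (b ! k))
      + 3 * real lam * (tour_weight w (o' # a) + tour_weight w (o' # b))"
proof -
  let ?T = "tour_weight w (o' # a) + tour_weight w (o' # b)"
  have T: "0 \<le> tour_weight w (o' # a)" "0 \<le> tour_weight w (o' # b)"
    by (simp_all add: tour_weight_nonneg)
  have D: "0 \<le> (\<Sum>k<length a. w (a ! k) (b ! k))"
    by (simp add: sum_nonneg nonneg)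
  show ?thesis
  proof (cases "length a \<le> lam")
    case True
    then have "(\<Sum>\<theta> = 1..lam. walk_weight w (route lam \<theta> o' a b)) \<le> (\<Sum>\<theta> = 1..lam. ?T)"
      by (intro sum_mono walk_weight_route_short len)
    moreover have "0 \<le> real lam * ?T" using T by simp
    ultimately show ?thesis using D by simp
  next
    case False
    let ?S = "\<lambda>\<theta>. \<Sum>i | \<theta> + lam * i < length a. w (a ! (\<theta> + lam * i)) (b ! (\<theta> + lam * i))"
    have "(\<Sum>\<theta> = 1..lam. walk_weight w (route lam \<theta> o' a b)) \<le> (\<Sum>\<theta> = 1..lam. 3 * ?T + 2 * ?S \<theta>)"
    proof (rule sum_mono)
      fix \<theta> assume "\<theta> \<in> {1..lam}"
      then show "walk_weight w (route lam \<theta> o' a b) \<le> 3 * ?T + 2 * ?S \<theta>"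
        using walk_weight_route_long[OF len _ \<open>\<theta> \<in> {1..lam}\<close>, of o'] False T by simp
    qed
    also have "\<dots> = 3 * real lam * ?T + 2 * (\<Sum>\<theta> = 1..lam. ?S \<theta>)"
      by (simp add: sum.distrib sum_distrib_left)
    also have "\<dots> \<le> 3 * real lam * ?T + 2 * (\<Sum>k<length a. w (a ! k) (b ! k))"
      using sum_strided_le_sum[OF lam, of "\<lambda>k. w (a ! k) (b ! k)"] by (simp add: nonneg)
    finally show ?thesis by simp
  qed
qed

end

theorem lemma7:
  fixes w :: "'a \<Rightarrow> 'a \<Rightarrow> real"
    and h m lam :: nat
    and o' s t :: "nat \<Rightarrow> 'a"
    and seq :: "nat \<Rightarrow> nat list"
  assumes w_refl: "\<And>x. w x x = 0"
    and w_sym: "\<And>x y. w x y = w y x"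
    and w_tri: "\<And>x y z. w x z \<le> w x y + w y z"
    and lam_pos: "lam \<ge> 1"
    and inj_o: "inj_on o' {1..h}"
    and inj_s: "inj_on s {1..m}"
    and inj_t: "inj_on t {1..m}"
    and disj_os: "o' ` {1..h} \<inter> s ` {1..m} = {}"
    and disj_ot: "o' ` {1..h} \<inter> t ` {1..m} = {}"
    and disj_st: "s ` {1..m} \<inter> t ` {1..m} = {}"
    and seq_range: "\<And>i. i \<in> {1..h} \<Longrightarrow> set (seq i) \<subseteq> {1..m}"
    and seq_once: "\<And>j. j \<in> {1..m} \<Longrightarrow> (\<Sum>i=1..h. count_list (seq i) j) = 1"
  shows "measure_pmf.expectation (Pi_pmf {1..h} 0 (\<lambda>_. pmf_of_set {1..lam}))
           (\<lambda>\<theta>. \<Sum>i=1..h. walk_weight w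
                (route lam (\<theta> i) (o' i) (map s (seq i)) (map t (seq i))))
         \<le> 2 / real lam * (\<Sum>j=1..m. w (s j) (t j))
           + 3 * ((\<Sum>i=1..h. tour_weight w (o' i # map s (seq i)))
                + (\<Sum>i=1..h. tour_weight w (o' i # map t (seq i))))"
proof -
  interpret pseudometric w
    using w_refl w_sym w_tri by unfold_locales
  have lam: "0 < lam" using lam_pos by simp
  define F where "F i \<theta> = walk_weight w (route lam \<theta> (o' i) (map s (seq i)) (map t (seq i)))" for i \<theta>
  define T where "T i = tour_weight w (o' i # map s (seq i)) + tour_weight w (o' i # map t (seq i))" for i
  define D where "D i = sum_list (map (\<lambda>j. w (s j) (t j)) (seq i))" for i
  have vehicle: "(\<Sum>\<theta> = 1..lam. F i \<theta>) / real lam \<le> 2 / real lam * D i + 3 * T i" for i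
  proof -
    have "(\<Sum>\<theta> = 1..lam. F i \<theta>) \<le> 2 * D i + 3 * real lam * T i"
      using sum_walk_weight_route_le[of "map t (seq i)" "map s (seq i)" lam "o' i"] lam
      by (simp add: F_def T_def D_def sum_list_sum_nth atLeast0LessThan)
    then show ?thesis using lam by (simp add: field_simps)
  qed
  have "measure_pmf.expectation (Pi_pmf {1..h} 0 (\<lambda>_. pmf_of_set {1..lam})) (\<lambda>\<theta>. \<Sum>i = 1..h. F i (\<theta> i))
      = (\<Sum>i = 1..h. (\<Sum>\<theta> = 1..lam. F i \<theta>) / real lam)"
    using lam by (simp add: expectation_Pi_pmf_sum integral_pmf_of_set integrable_measure_pmf_finite)
  also have "\<dots> \<le> (\<Sum>i = 1..h. 2 / real lam * D i + 3 * T i)"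
    by (intro sum_mono vehicle)
  also have "\<dots> = 2 / real lam * (\<Sum>i = 1..h. D i)
      + 3 * ((\<Sum>i = 1..h. tour_weight w (o' i # map s (seq i))) + (\<Sum>i = 1..h. tour_weight w (o' i # map t (seq i))))"
    by (simp add: T_def sum.distrib sum_distrib_left)
  also have "(\<Sum>i = 1..h. D i) = (\<Sum>j = 1..m. w (s j) (t j))"
    unfolding D_def using seq_range seq_once by (intro sum_sum_list_map_partition) auto
  finally show ?thesis by (simp add: F_def)
qed

end
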